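(* For any frozen activation pattern $R$, the unique harmonic extension of the boundary data satisfies $z^{(\ell)*} = \overline{W}^{(\ell)}\overline{a}^{(\ell-1)*}$ and $a^{(\ell)*} = R^{(\ell)}\,z^{(\ell)*}$ for all layers, with $\hat{y}^* = z^{(k+1)*}$. In particular, when $\overline{\mathbf{a}}^{(0)}$ is fixed to $\overline{\mathbf{x}}$, only the forward-pass activation pattern (i.e. $\mathbf{z}^{(\ell)}=W^{(\ell)}\mathbf{a}^{(\ell-1)}+b^{(\ell)}$, $\mathbf{a}^{(\ell)}=\mathrm{ReLU}(\mathbf{z}^{(\ell)})$) produces a harmonic extension that is also a global section.
   Context: Consider a feedforward ReLU network with $k$ hidden layers, widths $n_0,\dots,n_{k+1}$, weights $W^{(\ell)}$, biases $b^{(\ell)}$, identity output activation. Define $\overline{W}^{(\ell)} = (W^{(\ell)}\mid \mathrm{diag}(b^{(\ell)}))$, $\overline{a}^{(\ell)} = (a^{(\ell)}, \mathbf{1}_{n_{\ell+1}})$, $\overline{a}^{(0)}=\overline{\mathbf{x}}=(\mathbf{x},\mathbf{1}_{n_1})$. A cellular sheaf is built on the path graph $v_x - v_{z^{(1)}} - v_{a^{(1)}} - \cdots - v_{a^{(k)}} - v_{z^{(k+1)}} - v_y$; writing $\mathcal{F}_{v,e}$ for the restriction map from vertex $v$ to incident edge $e$, the weight edge from $v_{a^{(\ell-1)}}$ to $v_{z^{(\ell)}}$ has maps $\overline{W}^{(\ell)}$ and $I$, the activation edge from $v_{z^{(\ell)}}$ to $v_{a^{(\ell)}}$ has maps $R^{(\ell)}$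 (diagonal $0/1$) and the projection $P_{n_\ell}=(I_{n_\ell}\ 0)$, and the output edge from $v_{z^{(k+1)}}$ to $v_y$ has maps $I$ and $I$. The coboundary is $(\delta x)_e=\mathcal{F}_{v,e}x_v-\mathcal{F}_{u,e}x_u$ for $e=u\to v$. The boundary data $u$ consists of the input stalk at $v_x$ and the ones blocks in each $v_{a^{(\ell)}}$ stalk; the free coordinates are $\omega=(z^{(1)},a^{(1)},\dots,z^{(k+1)},\hat y)$. The harmonic extension is the minimizer of $\|\delta\overline{\omega}\|^2$ over $\omega$ with the boundary data fixed; it is unique because the restricted coboundary $\delta_\Omega$ is unitriangular (determinant 1). In the actual (state-dependent) sheaf, $R^{(\ell)}_{jj}=1$ iff the current $z^{(\ell)}_j\ge 0$; a global section is a cochain with $\delta\overline{\omega}=0$. Uniqueness of the self-consistent pattern assumes no pre-activation coordinate vanishes (a generic condition in the weights). *)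

theory Defs
  imports Main "HOL.Real"
begin

text \<open>Vectors are functions nat => real, matrices nat => nat => real; all
dimensions are kept explicit. Layer widths are n 0, ..., n (k+1).
W l, b l (for l = 1..k+1) are the weight matrix and bias of layer l.\<close>

definition mv :: "(nat \<Rightarrow> nat \<Rightarrow> real) \<Rightarrow> nat \<Rightarrow> (nat \<Rightarrow> real) \<Rightarrow> nat \<Rightarrow> real" where
  "mv M m v i = (\<Sum>j<m. M i j * v j)"

text \<open>Augmented weight matrix (W^(l) | diag(b^(l))), of size n l x (n (l-1) + n l).\<close>
definition Wbar :: "(nat \<Rightarrow> nat) \<Rightarrow> (nat \<Rightarrow> nat \<Rightarrow> nat \<Rightarrow> real) \<Rightarrow> (nat \<Rightarrow> nat \<Rightarrow> real)
    \<Rightarrow> nat \<Rightarrow> nat \<Rightarrow> nat \<Rightarrow> real" where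
  "Wbar n W b l i j = (if j < n (l - 1) then W l i j
                       else if j = n (l - 1) + i then b l i else 0)"

text \<open>Stalk value at vertex a^(l): for l = 0 it is the boundary datum u0 at v_x
(a vector of length n 0 + n 1); for l >= 1 it is (a^(l), 1_{n(l+1)}), whose ones
block is boundary data.\<close>
definition abar :: "(nat \<Rightarrow> nat) \<Rightarrow> (nat \<Rightarrow> real) \<Rightarrow> (nat \<Rightarrow> nat \<Rightarrow> real) \<Rightarrow> nat \<Rightarrow> nat \<Rightarrow> real" where
  "abar n u0 a l j = (if l = 0 then u0 j else if j < n l then a l j else 1)"

definition Pmat :: "(nat \<Rightarrow> nat) \<Rightarrow> nat \<Rightarrow> nat \<Rightarrow> nat \<Rightarrow> real" where
  "Pmat n l i j = (if i = j \<and> j < n l then 1 else 0)"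

definition Rmat :: "(nat \<Rightarrow> nat \<Rightarrow> bool) \<Rightarrow> nat \<Rightarrow> nat \<Rightarrow> nat \<Rightarrow> real" where
  "Rmat R l i j = (if i = j \<and> R l i then 1 else 0)"

text \<open>Free coordinates omega = (z, a, yhat): z l (l = 1..k+1), a l (l = 1..k), yhat.\<close>
type_synonym cochain = "(nat \<Rightarrow> nat \<Rightarrow> real) \<times> (nat \<Rightarrow> nat \<Rightarrow> real) \<times> (nat \<Rightarrow> real)"

definition valid_free :: "(nat \<Rightarrow> nat) \<Rightarrow> nat \<Rightarrow> cochain \<Rightarrow> bool" where
  "valid_free n k \<omega> = (case \<omega> of (z, a, y) \<Rightarrow>
     (\<forall>l i. \<not> (1 \<le> l \<and> l \<le> k + 1 \<and> i < n l) \<longrightarrow> z l i = 0) \<and>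
     (\<forall>l i. \<not> (1 \<le> l \<and> l \<le> k \<and> i < n l) \<longrightarrow> a l i = 0) \<and>
     (\<forall>i. n (k + 1) \<le> i \<longrightarrow> y i = 0))"

text \<open>Coboundary components (delta x)_e = F_{v,e} x_v - F_{u,e} x_u for e = u -> v.\<close>
definition delta_w :: "(nat \<Rightarrow> nat) \<Rightarrow> (nat \<Rightarrow> nat \<Rightarrow> nat \<Rightarrow> real) \<Rightarrow> (nat \<Rightarrow> nat \<Rightarrow> real)
    \<Rightarrow> (nat \<Rightarrow> real) \<Rightarrow> cochain \<Rightarrow> nat \<Rightarrow> nat \<Rightarrow> real" where
  "delta_w n W b u0 \<omega> l i = (case \<omega> of (z, a, y) \<Rightarrow>
     z l i - mv (Wbar n W b l) (n (l - 1) + n l) (abar n u0 a (l - 1)) i)"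

definition delta_act :: "(nat \<Rightarrow> nat) \<Rightarrow> (nat \<Rightarrow> nat \<Rightarrow> bool) \<Rightarrow> (nat \<Rightarrow> real) \<Rightarrow> cochain
    \<Rightarrow> nat \<Rightarrow> nat \<Rightarrow> real" where
  "delta_act n R u0 \<omega> l i = (case \<omega> of (z, a, y) \<Rightarrow>
     mv (Pmat n l) (n l + n (Suc l)) (abar n u0 a l) i - mv (Rmat R l) (n l) (z l) i)"

definition delta_out :: "nat \<Rightarrow> cochain \<Rightarrow> nat \<Rightarrow> real" where
  "delta_out k \<omega> i = (case \<omega> of (z, a, y) \<Rightarrow> y i - z (k + 1) i)"

definition energy :: "(nat \<Rightarrow> nat) \<Rightarrow> nat \<Rightarrow> (nat \<Rightarrow> nat \<Rightarrow> nat \<Rightarrow> real) \<Rightarrow> (nat \<Rightarrow> nat \<Rightarrow> real)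
    \<Rightarrow> (nat \<Rightarrow> nat \<Rightarrow> bool) \<Rightarrow> (nat \<Rightarrow> real) \<Rightarrow> cochain \<Rightarrow> real" where
  "energy n k W b R u0 \<omega> =
     (\<Sum>l\<in>{1..k+1}. \<Sum>i<n l. (delta_w n W b u0 \<omega> l i)\<^sup>2) +
     (\<Sum>l\<in>{1..k}. \<Sum>i<n l. (delta_act n R u0 \<omega> l i)\<^sup>2) +
     (\<Sum>i<n (k + 1). (delta_out k \<omega> i)\<^sup>2)"

definition harmonic_ext :: "(nat \<Rightarrow> nat) \<Rightarrow> nat \<Rightarrow> (nat \<Rightarrow> nat \<Rightarrow> nat \<Rightarrow> real) \<Rightarrow> (nat \<Rightarrow> nat \<Rightarrow> real)
    \<Rightarrow> (nat \<Rightarrow> nat \<Rightarrow> bool) \<Rightarrow> (nat \<Rightarrow> real) \<Rightarrow> cochain \<Rightarrow> bool" where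
  "harmonic_ext n k W b R u0 \<omega> =
     (valid_free n k \<omega> \<and>
      (\<forall>\<omega>'. valid_free n k \<omega>' \<longrightarrow> energy n k W b R u0 \<omega> \<le> energy n k W b R u0 \<omega>'))"

definition global_section :: "(nat \<Rightarrow> nat) \<Rightarrow> nat \<Rightarrow> (nat \<Rightarrow> nat \<Rightarrow> nat \<Rightarrow> real) \<Rightarrow> (nat \<Rightarrow> nat \<Rightarrow> real)
    \<Rightarrow> (nat \<Rightarrow> nat \<Rightarrow> bool) \<Rightarrow> (nat \<Rightarrow> real) \<Rightarrow> cochain \<Rightarrow> bool" where
  "global_section n k W b R u0 \<omega> =
     ((\<forall>l\<in>{1..k+1}. \<forall>i<n l. delta_w n W b u0 \<omega> l i = 0) \<and>
      (\<forall>l\<in>{1..k}. \<forall>i<n l. delta_act n R u0 \<omega> l i = 0) \<and>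
      (\<forall>i<n (k + 1). delta_out k \<omega> i = 0))"

definition actual_pattern :: "cochain \<Rightarrow> nat \<Rightarrow> nat \<Rightarrow> bool" where
  "actual_pattern \<omega> l j = (fst \<omega> l j \<ge> 0)"

definition xbar :: "(nat \<Rightarrow> nat) \<Rightarrow> (nat \<Rightarrow> real) \<Rightarrow> nat \<Rightarrow> real" where
  "xbar n x j = (if j < n 0 then x j else 1)"

primrec fwd_a :: "(nat \<Rightarrow> nat) \<Rightarrow> (nat \<Rightarrow> nat \<Rightarrow> nat \<Rightarrow> real) \<Rightarrow> (nat \<Rightarrow> nat \<Rightarrow> real)
    \<Rightarrow> (nat \<Rightarrow> real) \<Rightarrow> nat \<Rightarrow> nat \<Rightarrow> real" where
  "fwd_a n W b x 0 = x"
| "fwd_a n W b x (Suc l) = (\<lambda>i. max 0 (mv (W (Suc l)) (n l) (fwd_a n W b x l) i + b (Suc l) i))"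

definition fwd_z :: "(nat \<Rightarrow> nat) \<Rightarrow> (nat \<Rightarrow> nat \<Rightarrow> nat \<Rightarrow> real) \<Rightarrow> (nat \<Rightarrow> nat \<Rightarrow> real)
    \<Rightarrow> (nat \<Rightarrow> real) \<Rightarrow> nat \<Rightarrow> nat \<Rightarrow> real" where
  "fwd_z n W b x l i = mv (W l) (n (l - 1)) (fwd_a n W b x (l - 1)) i + b l i"

end

theory Submission
  imports Defs
begin

(* With the activation pattern frozen, the coboundary on the free coordinates is
   unitriangular: the weight edge into z^(l) determines z^(l) from the stalk at a^(l-1),
   the activation edge determines a^(l) = R^(l) z^(l), and the output edge determines yhat.
   Solving these equations forward gives a cochain of energy 0, so the minimisers of the
   energy are exactly the global sections, and forward substitution shows there is only one.
   For the input xbar, this frozen forward pass is the ReLU forward pass as long as R agrees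
   with the signs of the forward pre-activations. Conversely, if the harmonic extension is also
   a section of the state-dependent sheaf, then R and the sign pattern of z mask z in the same
   way; since no pre-activation vanishes, the two patterns agree, layer by layer. *)

lemma mv_Wbar:
  assumes "i < n l"
  shows "mv (Wbar n W b l) (n (l - 1) + n l) v i =
    mv (W l) (n (l - 1)) v i + b l i * v (n (l - 1) + i)"
proof -
  let ?p = "n (l - 1)"
  have "mv (Wbar n W b l) (?p + n l) v i
      = (\<Sum>j<?p. Wbar n W b l i j * v j) + (\<Sum>j\<in>{?p..<?p + n l}. Wbar n W b l i j * v j)"
    unfolding mv_def
    by (subst sum.atLeastLessThan_concat[of 0 ?p, symmetric, simplified atLeast0LessThan]) auto
  also have "(\<Sum>j<?p. Wbar n W b l i j * v j) = mv (W l) ?p v i"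
    unfolding mv_def by (rule sum.cong) (auto simp: Wbar_def)
  also have "(\<Sum>j\<in>{?p..<?p + n l}. Wbar n W b l i j * v j) = b l i * v (?p + i)"
    using assms by (simp add: Wbar_def if_distrib[of "\<lambda>c. c * _"] sum.If_cases)
  finally show ?thesis .
qed

lemma mv_Pmat:
  assumes "i < n l"
  shows "mv (Pmat n l) (n l + m) v i = v i"
proof -
  have "{..<n l + m} \<inter> {j. i = j \<and> j < n l} = {i}"
    using assms by auto
  then show ?thesis
    using assms by (simp add: mv_def Pmat_def if_distrib[of "\<lambda>c. c * _"] sum.If_cases)
qed

lemma mv_Rmat:
  assumes "i < m"
  shows "mv (Rmat R l) m v i = (if R l i then v i else 0)"
  using assms by (simp add: mv_def Rmat_def if_distrib[of "\<lambda>c. c * _"] sum.If_cases)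

lemma energy_nonneg: "0 \<le> energy n k W b R u0 \<omega>"
  by (simp add: energy_def sum_nonneg add_nonneg_nonneg)

lemma sum_squares_eq_0_iff:
  fixes f :: "'a \<Rightarrow> real"
  assumes "finite A"
  shows "(\<Sum>x\<in>A. (f x)\<^sup>2) = 0 \<longleftrightarrow> (\<forall>x\<in>A. f x = 0)"
  using assms by (simp add: sum_nonneg_eq_0_iff)

lemma double_sum_squares_eq_0_iff:
  fixes g :: "'a \<Rightarrow> nat \<Rightarrow> real"
  assumes "finite L"
  shows "(\<Sum>l\<in>L. \<Sum>i<m l. (g l i)\<^sup>2) = 0 \<longleftrightarrow> (\<forall>l\<in>L. \<forall>i<m l. g l i = 0)"
  using assms by (subst sum_nonneg_eq_0_iff) (auto intro: sum_nonneg simp: sum_squares_eq_0_iff)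

lemma energy_eq_0_iff: "energy n k W b R u0 \<omega> = 0 \<longleftrightarrow> global_section n k W b R u0 \<omega>"
proof -
  let ?w = "\<Sum>l\<in>{1..k+1}. \<Sum>i<n l. (delta_w n W b u0 \<omega> l i)\<^sup>2"
  let ?act = "\<Sum>l\<in>{1..k}. \<Sum>i<n l. (delta_act n R u0 \<omega> l i)\<^sup>2"
  let ?out = "\<Sum>i<n (k + 1). (delta_out k \<omega> i)\<^sup>2"
  have "0 \<le> ?w" "0 \<le> ?act" "0 \<le> ?out" by (simp_all add: sum_nonneg)
  then have "energy n k W b R u0 \<omega> = 0 \<longleftrightarrow> ?w = 0 \<and> ?act = 0 \<and> ?out = 0"
    unfolding energy_def by linarith
  then show ?thesis
    unfolding global_section_def
    by (simp only: double_sum_squares_eq_0_iff sum_squares_eq_0_iff finite_atLeastAtMost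
        finite_lessThan lessThan_iff Ball_def)
qed

lemma delta_act_eq:
  assumes "1 \<le> l" "i < n l"
  shows "delta_act n R u0 (z, a, y) l i = a l i - (if R l i then z l i else 0)"
  using assms by (simp add: delta_act_def mv_Pmat mv_Rmat abar_def)

lemma global_section_iff:
  "global_section n k W b R u0 (z, a, y) \<longleftrightarrow>
     (\<forall>l\<in>{1..k+1}. \<forall>i<n l. z l i = mv (Wbar n W b l) (n (l - 1) + n l) (abar n u0 a (l - 1)) i) \<and>
     (\<forall>l\<in>{1..k}. \<forall>i<n l. a l i = (if R l i then z l i else 0)) \<and>
     (\<forall>i<n (k + 1). y i = z (k + 1) i)"
  unfolding global_section_def delta_w_def delta_out_def by (auto simp: delta_act_eq)

lemma global_section_pattern_cong:
  assumes "\<forall>l\<in>{1..k}. \<forall>j<n l. R l j = R' l j"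
  shows "global_section n k W b R u0 \<omega> \<longleftrightarrow> global_section n k W b R' u0 \<omega>"
  using assms by (cases \<omega>) (simp add: global_section_iff)

primrec frozen_abar :: "(nat \<Rightarrow> nat) \<Rightarrow> (nat \<Rightarrow> nat \<Rightarrow> nat \<Rightarrow> real) \<Rightarrow> (nat \<Rightarrow> nat \<Rightarrow> real)
    \<Rightarrow> (nat \<Rightarrow> nat \<Rightarrow> bool) \<Rightarrow> (nat \<Rightarrow> real) \<Rightarrow> nat \<Rightarrow> nat \<Rightarrow> real" where
  "frozen_abar n W b R u0 0 = u0"
| "frozen_abar n W b R u0 (Suc l) = (\<lambda>j. if j < n (Suc l) then
      (if R (Suc l) j then mv (Wbar n W b (Suc l)) (n l + n (Suc l)) (frozen_abar n W b R u0 l) j else 0)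
    else 1)"

definition frozen_z :: "(nat \<Rightarrow> nat) \<Rightarrow> (nat \<Rightarrow> nat \<Rightarrow> nat \<Rightarrow> real) \<Rightarrow> (nat \<Rightarrow> nat \<Rightarrow> real)
    \<Rightarrow> (nat \<Rightarrow> nat \<Rightarrow> bool) \<Rightarrow> (nat \<Rightarrow> real) \<Rightarrow> nat \<Rightarrow> nat \<Rightarrow> real" where
  "frozen_z n W b R u0 l i = mv (Wbar n W b l) (n (l - 1) + n l) (frozen_abar n W b R u0 (l - 1)) i"

definition frozen_section :: "(nat \<Rightarrow> nat) \<Rightarrow> nat \<Rightarrow> (nat \<Rightarrow> nat \<Rightarrow> nat \<Rightarrow> real) \<Rightarrow> (nat \<Rightarrow> nat \<Rightarrow> real)
    \<Rightarrow> (nat \<Rightarrow> nat \<Rightarrow> bool) \<Rightarrow> (nat \<Rightarrow> real) \<Rightarrow> cochain" where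
  "frozen_section n k W b R u0 =
     ((\<lambda>l i. if 1 \<le> l \<and> l \<le> k + 1 \<and> i < n l then frozen_z n W b R u0 l i else 0),
      (\<lambda>l i. if 1 \<le> l \<and> l \<le> k \<and> i < n l then frozen_abar n W b R u0 l i else 0),
      (\<lambda>i. if i < n (k + 1) then frozen_z n W b R u0 (k + 1) i else 0))"

lemma frozen_abar_layer:
  assumes "1 \<le> l" "j < n l"
  shows "frozen_abar n W b R u0 l j = (if R l j then frozen_z n W b R u0 l j else 0)"
  using assms by (cases l) (simp_all add: frozen_z_def)

lemma frozen_section_valid: "valid_free n k (frozen_section n k W b R u0)"
  by (simp add: valid_free_def frozen_section_def)

lemma frozen_section_global: "global_section n k W b R u0 (frozen_section n k W b R u0)"
proof -
  let ?a = "fst (snd (frozen_section n k W b R u0))"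
  have "abar n u0 ?a l = frozen_abar n W b R u0 l" if "l \<le> k" for l
    using that by (cases l) (auto simp: abar_def frozen_section_def fun_eq_iff)
  then show ?thesis
    by (auto simp: global_section_iff frozen_section_def frozen_z_def frozen_abar_layer)
qed

lemma global_section_abar_eq_frozen:
  assumes "global_section n k W b R u0 (z, a, y)" "l \<le> k"
  shows "abar n u0 a l = frozen_abar n W b R u0 l"
  using assms(2)
proof (induction l)
  case 0
  then show ?case by (simp add: abar_def fun_eq_iff)
next
  case (Suc l)
  have "a (Suc l) j = frozen_abar n W b R u0 (Suc l) j" if "j < n (Suc l)" for j
    using assms(1) Suc that by (simp add: global_section_iff)
  then show ?case by (simp add: abar_def fun_eq_iff)
qed

lemma global_section_z_eq_frozen:
  assumes "global_section n k W b R u0 (z, a, y)" "l \<in> {1..k+1}" "i < n l"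
  shows "z l i = frozen_z n W b R u0 l i"
proof -
  have "abar n u0 a (l - 1) = frozen_abar n W b R u0 (l - 1)"
    using assms by (intro global_section_abar_eq_frozen) auto
  with assms show ?thesis by (simp add: global_section_iff frozen_z_def)
qed

lemma valid_global_section_eq_frozen:
  assumes "valid_free n k \<omega>" "global_section n k W b R u0 \<omega>"
  shows "\<omega> = frozen_section n k W b R u0"
proof -
  obtain z a y where \<omega>: "\<omega> = (z, a, y)" by (cases \<omega>)
  have z_eq: "z l i = frozen_z n W b R u0 l i" if "l \<in> {1..k+1}" "i < n l" for l i
    using global_section_z_eq_frozen assms(2) that unfolding \<omega> by blast
  have "a l i = frozen_abar n W b R u0 l i" if "l \<in> {1..k}" "i < n l" for l i
  proof -
    have "a l i = abar n u0 a l i" using that by (simp add: abar_def)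
    also have "\<dots> = frozen_abar n W b R u0 l i"
      using global_section_abar_eq_frozen assms(2) that unfolding \<omega> by simp
    finally show ?thesis .
  qed
  with z_eq assms show ?thesis
    unfolding \<omega> by (auto simp: frozen_section_def valid_free_def global_section_iff fun_eq_iff)
qed

lemma harmonic_ext_iff_valid_global_section:
  "harmonic_ext n k W b R u0 \<omega> \<longleftrightarrow> valid_free n k \<omega> \<and> global_section n k W b R u0 \<omega>"
proof
  assume harmonic: "harmonic_ext n k W b R u0 \<omega>"
  then have "energy n k W b R u0 \<omega> \<le> energy n k W b R u0 (frozen_section n k W b R u0)"
    using frozen_section_valid unfolding harmonic_ext_def by blast
  also have "\<dots> = 0"
    using frozen_section_global energy_eq_0_iff by blast
  finally show "valid_free n k \<omega> \<and> global_section n k W b R u0 \<omega>"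
    using harmonic energy_nonneg[of n k W b R u0 \<omega>]
    by (simp add: harmonic_ext_def energy_eq_0_iff[symmetric])
next
  assume "valid_free n k \<omega> \<and> global_section n k W b R u0 \<omega>"
  then show "harmonic_ext n k W b R u0 \<omega>"
    by (simp add: harmonic_ext_def energy_eq_0_iff[symmetric] energy_nonneg)
qed

lemma harmonic_ext_iff_frozen:
  "harmonic_ext n k W b R u0 \<omega> \<longleftrightarrow> \<omega> = frozen_section n k W b R u0"
  using harmonic_ext_iff_valid_global_section valid_global_section_eq_frozen
    frozen_section_valid frozen_section_global by metis

lemma fwd_z_eq_weight_edge:
  assumes "1 \<le> l" "i < n l"
  shows "fwd_z n W b x l i =
    mv (Wbar n W b l) (n (l - 1) + n l) (abar n (xbar n x) (fwd_a n W b x) (l - 1)) i"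
proof -
  let ?v = "abar n (xbar n x) (fwd_a n W b x) (l - 1)"
  have "?v j = fwd_a n W b x (l - 1) j" if "j < n (l - 1)" for j
    using that by (cases "l - 1") (simp_all add: abar_def xbar_def)
  then have "mv (W l) (n (l - 1)) ?v i = mv (W l) (n (l - 1)) (fwd_a n W b x (l - 1)) i"
    unfolding mv_def by (intro sum.cong) auto
  moreover have "?v (n (l - 1) + i) = 1"
    by (simp add: abar_def xbar_def)
  ultimately show ?thesis
    using mv_Wbar[of i n l W b ?v] assms(2) by (simp add: fwd_z_def)
qed

lemma frozen_abar_eq_forward:
  assumes "\<forall>l'\<in>{1..l}. \<forall>j<n l'. R l' j = (0 \<le> fwd_z n W b x l' j)"
  shows "frozen_abar n W b R (xbar n x) l = abar n (xbar n x) (fwd_a n W b x) l"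
  using assms
proof (induction l)
  case 0
  then show ?case by (simp add: abar_def fun_eq_iff)
next
  case (Suc l)
  have "frozen_abar n W b R (xbar n x) (Suc l) j = fwd_a n W b x (Suc l) j"
    if "j < n (Suc l)" for j
    using Suc fwd_z_eq_weight_edge[of "Suc l" j] that
    by (auto simp: fwd_z_def)
  then show ?case by (simp add: abar_def fun_eq_iff)
qed

lemma frozen_z_eq_fwd_z:
  assumes "\<forall>l'\<in>{1..l - 1}. \<forall>j<n l'. R l' j = (0 \<le> fwd_z n W b x l' j)" "1 \<le> l" "i < n l"
  shows "frozen_z n W b R (xbar n x) l i = fwd_z n W b x l i"
  using assms by (simp add: frozen_z_def frozen_abar_eq_forward fwd_z_eq_weight_edge)

lemma self_consistent_pattern_eq_forward:
  assumes nonzero: "\<forall>l\<in>{1..k}. \<forall>j<n l. fwd_z n W b x l j \<noteq> 0"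
    and frozen: "global_section n k W b R (xbar n x) (z, a, y)"
    and actual: "global_section n k W b (actual_pattern (z, a, y)) (xbar n x) (z, a, y)"
  shows "\<forall>l\<in>{1..k}. \<forall>j<n l. R l j = (0 \<le> fwd_z n W b x l j)"
proof -
  have "\<forall>l\<in>{1..m}. \<forall>j<n l. R l j = (0 \<le> fwd_z n W b x l j)" if "m \<le> k" for m
    using that
  proof (induction m)
    case 0
    then show ?case by simp
  next
    case (Suc m)
    have "R (Suc m) j = (0 \<le> fwd_z n W b x (Suc m) j)" if j: "j < n (Suc m)" for j
    proof -
      have "z (Suc m) j = fwd_z n W b x (Suc m) j"
        using global_section_z_eq_frozen[OF frozen] frozen_z_eq_fwd_z Suc j by simp
      moreover have "(if R (Suc m) j then z (Suc m) j else 0) =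
          (if 0 \<le> z (Suc m) j then z (Suc m) j else 0)"
        using frozen actual Suc.prems j by (simp add: global_section_iff actual_pattern_def)
      ultimately show ?thesis
        using nonzero Suc.prems j by (auto split: if_splits)
    qed
    with Suc show ?case by (auto simp: le_Suc_eq)
  qed
  then show ?thesis by blast
qed

lemma forward_pattern_self_consistent:
  assumes forward: "\<forall>l\<in>{1..k}. \<forall>j<n l. R l j = (0 \<le> fwd_z n W b x l j)"
    and frozen: "global_section n k W b R (xbar n x) (z, a, y)"
  shows "global_section n k W b (actual_pattern (z, a, y)) (xbar n x) (z, a, y)"
proof -
  have "actual_pattern (z, a, y) l j = R l j" if "l \<in> {1..k}" "j < n l" for l j
  proof -
    have "\<forall>l'\<in>{1..l - 1}. \<forall>j<n l'. R l' j = (0 \<le> fwd_z n W b x l' j)"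
      using forward that by auto
    then have "z l j = fwd_z n W b x l j"
      using global_section_z_eq_frozen[OF frozen] frozen_z_eq_fwd_z that by auto
    then show ?thesis using forward that by (simp add: actual_pattern_def)
  qed
  then show ?thesis using frozen global_section_pattern_cong by blast
qed

lemma harmonic_ext_layer_equations:
  assumes "harmonic_ext n k W b R u0 (z, a, y)"
  shows "(\<forall>l\<in>{1..k+1}. \<forall>i<n l.
            z l i = mv (Wbar n W b l) (n (l - 1) + n l) (abar n u0 a (l - 1)) i) \<and>
         (\<forall>l\<in>{1..k}. \<forall>i<n l. a l i = mv (Rmat R l) (n l) (z l) i) \<and>
         (\<forall>i<n (k + 1). y i = z (k + 1) i)"
  using assms by (simp add: harmonic_ext_iff_valid_global_section global_section_iff mv_Rmat)

lemma harmonic_ext_self_consistent_iff_forward_pattern: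
  assumes "\<forall>l\<in>{1..k}. \<forall>j<n l. fwd_z n W b x l j \<noteq> 0"
    and "harmonic_ext n k W b R (xbar n x) \<omega>"
  shows "global_section n k W b (actual_pattern \<omega>) (xbar n x) \<omega> \<longleftrightarrow>
         (\<forall>l\<in>{1..k}. \<forall>j<n l. R l j = (0 \<le> fwd_z n W b x l j))"
proof -
  obtain z a y where \<omega>: "\<omega> = (z, a, y)" by (cases \<omega>)
  have "global_section n k W b R (xbar n x) (z, a, y)"
    using assms(2) \<omega> harmonic_ext_iff_valid_global_section by blast
  then show ?thesis
    using assms(1) self_consistent_pattern_eq_forward forward_pattern_self_consistent
    unfolding \<omega> by metis
qed

theorem proposition3p4:
  fixes k :: nat and n :: "nat \<Rightarrow> nat"
    and W :: "nat \<Rightarrow> nat \<Rightarrow> nat \<Rightarrow> real" and b :: "nat \<Rightarrow> nat \<Rightarrow> real"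
  shows "(\<forall>R u0. (\<exists>!\<omega>. harmonic_ext n k W b R u0 \<omega>) \<and>
           (\<forall>z a y. harmonic_ext n k W b R u0 (z, a, y) \<longrightarrow>
              (\<forall>l\<in>{1..k+1}. \<forall>i<n l.
                  z l i = mv (Wbar n W b l) (n (l - 1) + n l) (abar n u0 a (l - 1)) i) \<and>
              (\<forall>l\<in>{1..k}. \<forall>i<n l. a l i = mv (Rmat R l) (n l) (z l) i) \<and>
              (\<forall>i<n (k + 1). y i = z (k + 1) i))) \<and>
         (\<forall>x. (\<forall>l\<in>{1..k}. \<forall>j<n l. fwd_z n W b x l j \<noteq> 0) \<longrightarrow>
           (\<forall>R \<omega>. harmonic_ext n k W b R (xbar n x) \<omega> \<longrightarrow>
              (global_section n k W b (actual_pattern \<omega>) (xbar n x) \<omega> \<longleftrightarrow>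
               (\<forall>l\<in>{1..k}. \<forall>j<n l. R l j = (fwd_z n W b x l j \<ge> 0)))))"
proof -
  have "\<exists>!\<omega>. harmonic_ext n k W b R u0 \<omega>" for R u0
    by (simp add: harmonic_ext_iff_frozen)
  then show ?thesis
    using harmonic_ext_layer_equations harmonic_ext_self_consistent_iff_forward_pattern
    by simp
qed

end
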